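(* Let $G=(V,E)$ be a finite simple graph with at least one vertex, and let $r$ be the largest eigenvalue of the adjacency matrix of its connection graph $G'$. Then the spectral radius $\rho$ of the Hodge Laplacian $H=(d+d^T)^2$ of $G$ satisfies $$\rho \le (1+r) - \frac{1}{1+r}.$$
   Context: Let $G=(V,E)$ be a finite simple graph. Its associated $1$-dimensional simplicial complex is the set of simplices $X=\{\{v\}: v\in V\}\cup E$, where each edge is regarded as a $2$-element subset of $V$; put $N=|V|+|E|$ and index $N\times N$ matrices by $X$. The connection graph $G'$ has vertex set $X$, and two distinct $x,y\in X$ are adjacent iff $x\cap y\neq\emptyset$. For the Hodge Laplacian, fix an orientation of each edge; for an edge $x=\{a,b\}$ oriented from $a$ to $b$ set $d(x,\{a\})=-1$, $d(x,\{b\})=1$, and let all other entries of $d$ be $0$. The Hodge Laplacian is $H=(d+d^T)^2$; it is the direct sum of the Kirchhoff Laplacian $H_0$ (on vertices) and the $1$-form Laplacian $H_1$ (on edges), and its spectrum does not depend on the chosen orientation. *)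

theory Defs
  imports Complex_Main
begin

definition simple_graph :: "'a set \<Rightarrow> 'a set set \<Rightarrow> bool" where
  "simple_graph V E \<longleftrightarrow> finite V \<and>
     (\<forall>e\<in>E. \<exists>a b. a \<in> V \<and> b \<in> V \<and> a \<noteq> b \<and> e = {a, b})"

definition simplices :: "'a set \<Rightarrow> 'a set set \<Rightarrow> 'a set set" where
  "simplices V E = (\<lambda>v. {v}) ` V \<union> E"

text \<open>Matrices indexed by the finite set X are functions X \<Rightarrow> X \<Rightarrow> real
  (entries outside X are irrelevant).\<close>

definition conn_adj :: "'a set \<Rightarrow> 'a set \<Rightarrow> real" where
  "conn_adj x y = (if x \<noteq> y \<and> x \<inter> y \<noteq> {} then 1 else 0)"

definition orientation :: "'a set set \<Rightarrow> ('a set \<Rightarrow> 'a) \<Rightarrow> bool" where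
  "orientation E head \<longleftrightarrow> (\<forall>e\<in>E. head e \<in> e)"

definition ext_d :: "'a set set \<Rightarrow> ('a set \<Rightarrow> 'a) \<Rightarrow> 'a set \<Rightarrow> 'a set \<Rightarrow> real" where
  "ext_d E head x y =
     (if x \<in> E \<and> y = {head x} then 1
      else if x \<in> E \<and> (\<exists>a. y = {a} \<and> a \<in> x \<and> a \<noteq> head x) then -1
      else 0)"

definition mat_mult_on :: "'b set \<Rightarrow> ('b \<Rightarrow> 'b \<Rightarrow> real) \<Rightarrow> ('b \<Rightarrow> 'b \<Rightarrow> real) \<Rightarrow> 'b \<Rightarrow> 'b \<Rightarrow> real" where
  "mat_mult_on X A B x y = (\<Sum>z\<in>X. A x z * B z y)"

definition hodge :: "'a set \<Rightarrow> 'a set set \<Rightarrow> ('a set \<Rightarrow> 'a) \<Rightarrow> 'a set \<Rightarrow> 'a set \<Rightarrow> real" where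
  "hodge V E head =
     (let D = (\<lambda>x y. ext_d E head x y + ext_d E head y x)
      in mat_mult_on (simplices V E) D D)"

definition is_eigenvalue_on :: "'b set \<Rightarrow> ('b \<Rightarrow> 'b \<Rightarrow> real) \<Rightarrow> complex \<Rightarrow> bool" where
  "is_eigenvalue_on X A mu \<longleftrightarrow>
     (\<exists>v :: 'b \<Rightarrow> complex. (\<exists>x\<in>X. v x \<noteq> 0) \<and>
        (\<forall>x\<in>X. (\<Sum>y\<in>X. complex_of_real (A x y) * v y) = mu * v x))"

definition spectral_radius_on :: "'b set \<Rightarrow> ('b \<Rightarrow> 'b \<Rightarrow> real) \<Rightarrow> real" where
  "spectral_radius_on X A = Max {cmod mu | mu. is_eigenvalue_on X A mu}"

definition largest_eigenvalue_on :: "'b set \<Rightarrow> ('b \<Rightarrow> 'b \<Rightarrow> real) \<Rightarrow> real" where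
  "largest_eigenvalue_on X A = Max {r. is_eigenvalue_on X A (complex_of_real r)}"

end

(* H = D^2 for the symmetric matrix D = d + d^T, so the spectral radius of H is one of its
   eigenvalues m >= 0.  D only couples vertices with edges, hence for m > 0 there is an
   eigenvector u supported on the edges; with B = |D| and w = |u| one has
   |B w|^2 >= |D u|^2 = m |w|^2.  In block form the adjacency matrix of the connection graph
   is B between vertices and edges, 0 between vertices, and B^2 - 2 between edges, so the
   Rayleigh quotient of w + B w / l is at least l when m = (1 + l) - 1/(1 + l).  Hence
   r >= l, and the bound follows because t |-> (1 + t) - 1/(1 + t) is increasing. *)

theory Submission
  imports Defs "HOL-Analysis.Function_Topology" "Jordan_Normal_Form.Char_Poly"
begin

section \<open>The function \<open>t \<mapsto> (1 + t) - 1 / (1 + t)\<close>\<close>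

lemma pos_eq_add_one_minus_inverse:
  fixes m :: real
  assumes "0 < m"
  obtains l where "0 < l" and "m = (1 + l) - 1 / (1 + l)"
proof
  define s where "s = (m + sqrt (m\<^sup>2 + 4)) / 2"
  have "(2 - m)\<^sup>2 < m\<^sup>2 + 4"
    using assms by (simp add: power2_eq_square algebra_simps)
  then have "2 - m < sqrt (m\<^sup>2 + 4)"
    by (rule real_less_rsqrt)
  then show "0 < s - 1"
    unfolding s_def by simp
  have "(sqrt (m\<^sup>2 + 4))\<^sup>2 = m\<^sup>2 + 4"
    by simp
  then have "s * s = m * s + 1"
    unfolding s_def by (simp add: power2_eq_square algebra_simps)
  moreover have "0 < s"
    using \<open>0 < s - 1\<close> by simp
  ultimately show "m = (1 + (s - 1)) - 1 / (1 + (s - 1))"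
    by (simp add: field_simps)
qed

lemma add_one_minus_inverse_mono:
  fixes a b :: real
  assumes "0 \<le> a" and "a \<le> b"
  shows "(1 + a) - 1 / (1 + a) \<le> (1 + b) - 1 / (1 + b)"
proof -
  have "1 / (1 + b) \<le> 1 / (1 + a)"
    using assms by (simp add: frac_le)
  then show ?thesis
    using assms(2) by simp
qed

lemma add_one_minus_inverse_rayleigh_bound:
  fixes l m S W :: real
  assumes l: "0 < l" and m: "m = (1 + l) - 1 / (1 + l)" and le: "m * W \<le> S"
  shows "l * (W + (1 / l)\<^sup>2 * S) \<le> (1 + 2 * (1 / l)) * S - 2 * W"
proof -
  have "m * (1 + l) = l * (l + 2)"
    unfolding m using l by (simp add: field_simps algebra_simps)
  then have lm: "m * (1 + 1 / l) = l + 2"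
    using l by (simp add: field_simps algebra_simps)
  have "(1 + 2 * (1 / l)) * S - 2 * W - l * (W + (1 / l)\<^sup>2 * S) = (1 + 1 / l) * S - (l + 2) * W"
    using l by (simp add: field_simps power2_eq_square)
  also have "\<dots> = (1 + 1 / l) * (S - m * W)"
    by (subst lm[symmetric]) (simp add: algebra_simps)
  also have "\<dots> \<ge> 0"
    using le l by simp
  finally show ?thesis
    by simp
qed

section \<open>Real matrices indexed by a finite set\<close>

definition mat_vec :: "'b set \<Rightarrow> ('b \<Rightarrow> 'b \<Rightarrow> real) \<Rightarrow> ('b \<Rightarrow> real) \<Rightarrow> 'b \<Rightarrow> real" where
  "mat_vec X A f x = (\<Sum>y\<in>X. A x y * f y)"

definition inner_on :: "'b set \<Rightarrow> ('b \<Rightarrow> real) \<Rightarrow> ('b \<Rightarrow> real) \<Rightarrow> real" where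
  "inner_on X u v = (\<Sum>x\<in>X. u x * v x)"

abbreviation norm2_on :: "'b set \<Rightarrow> ('b \<Rightarrow> real) \<Rightarrow> real" where
  "norm2_on X u \<equiv> inner_on X u u"

definition symmetric_on :: "'b set \<Rightarrow> ('b \<Rightarrow> 'b \<Rightarrow> real) \<Rightarrow> bool" where
  "symmetric_on X A \<longleftrightarrow> (\<forall>x\<in>X. \<forall>y\<in>X. A x y = A y x)"

definition eigenvector_on :: "'b set \<Rightarrow> ('b \<Rightarrow> 'b \<Rightarrow> real) \<Rightarrow> real \<Rightarrow> ('b \<Rightarrow> real) \<Rightarrow> bool" where
  "eigenvector_on X A m p \<longleftrightarrow> (\<exists>x\<in>X. p x \<noteq> 0) \<and> (\<forall>x\<in>X. mat_vec X A p x = m * p x)"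

lemma mat_vec_cong: "(\<And>y. y \<in> X \<Longrightarrow> f y = g y) \<Longrightarrow> mat_vec X A f x = mat_vec X A g x"
  unfolding mat_vec_def by (auto intro!: sum.cong)

lemma mat_vec_add: "mat_vec X A (\<lambda>y. f y + g y) = (\<lambda>x. mat_vec X A f x + mat_vec X A g x)"
  unfolding mat_vec_def by (simp add: sum.distrib distrib_left)

lemma mat_vec_scale: "mat_vec X A (\<lambda>y. c * f y) = (\<lambda>x. c * mat_vec X A f x)"
  unfolding mat_vec_def by (simp add: sum_distrib_left mult.left_commute)

lemma mat_vec_mat_mult_on: "mat_vec X (mat_mult_on X A B) f x = mat_vec X A (mat_vec X B f) x"
proof -
  have "mat_vec X (mat_mult_on X A B) f x = (\<Sum>y\<in>X. \<Sum>z\<in>X. A x z * B z y * f y)"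
    unfolding mat_vec_def mat_mult_on_def by (simp add: sum_distrib_right)
  also have "\<dots> = (\<Sum>z\<in>X. \<Sum>y\<in>X. A x z * B z y * f y)"
    by (rule sum.swap)
  also have "\<dots> = mat_vec X A (mat_vec X B f) x"
    unfolding mat_vec_def by (simp add: sum_distrib_left mult.assoc)
  finally show ?thesis .
qed

lemma inner_on_cong: "(\<And>x. x \<in> X \<Longrightarrow> u x = u' x) \<Longrightarrow> (\<And>x. x \<in> X \<Longrightarrow> v x = v' x) \<Longrightarrow>
    inner_on X u v = inner_on X u' v'"
  unfolding inner_on_def by (auto intro!: sum.cong)

lemma inner_on_commute: "inner_on X u v = inner_on X v u"
  unfolding inner_on_def by (simp add: mult.commute)

lemma inner_on_add_left: "inner_on X (\<lambda>x. u x + v x) w = inner_on X u w + inner_on X v w"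
  unfolding inner_on_def by (simp add: sum.distrib distrib_right)

lemma inner_on_add_right: "inner_on X u (\<lambda>x. v x + w x) = inner_on X u v + inner_on X u w"
  unfolding inner_on_def by (simp add: sum.distrib distrib_left)

lemma inner_on_diff_right: "inner_on X u (\<lambda>x. v x - w x) = inner_on X u v - inner_on X u w"
  unfolding inner_on_def by (simp add: sum_subtractf right_diff_distrib)

lemma inner_on_scale_left: "inner_on X (\<lambda>x. c * u x) v = c * inner_on X u v"
  unfolding inner_on_def by (simp add: sum_distrib_left mult.assoc)

lemma inner_on_scale_right: "inner_on X u (\<lambda>x. c * v x) = c * inner_on X u v"
  unfolding inner_on_def by (simp add: sum_distrib_left mult.left_commute)

lemma inner_on_disjoint_support: "(\<And>x. x \<in> X \<Longrightarrow> u x = 0 \<or> v x = 0) \<Longrightarrow> inner_on X u v = 0"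
  unfolding inner_on_def by (rule sum.neutral) auto

lemma norm2_on_nonneg: "0 \<le> norm2_on X u"
  unfolding inner_on_def by (intro sum_nonneg) simp

lemma norm2_on_eq_0_iff: "finite X \<Longrightarrow> norm2_on X u = 0 \<longleftrightarrow> (\<forall>x\<in>X. u x = 0)"
  unfolding inner_on_def by (simp add: sum_nonneg_eq_0_iff)

lemma norm2_on_pos_iff: "finite X \<Longrightarrow> 0 < norm2_on X u \<longleftrightarrow> (\<exists>x\<in>X. u x \<noteq> 0)"
  using norm2_on_eq_0_iff[of X u] norm2_on_nonneg[of X u] by auto

lemma norm2_on_abs: "norm2_on X (\<lambda>x. \<bar>u x\<bar>) = norm2_on X u"
  unfolding inner_on_def by simp

lemma inner_on_mat_vec_symmetric:
  assumes "symmetric_on X A"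
  shows "inner_on X u (mat_vec X A v) = inner_on X (mat_vec X A u) v"
proof -
  have "inner_on X u (mat_vec X A v) = (\<Sum>x\<in>X. \<Sum>y\<in>X. u x * A x y * v y)"
    unfolding inner_on_def mat_vec_def by (simp add: sum_distrib_left mult.assoc)
  also have "\<dots> = (\<Sum>y\<in>X. \<Sum>x\<in>X. u x * A x y * v y)"
    by (rule sum.swap)
  also have "\<dots> = (\<Sum>y\<in>X. \<Sum>x\<in>X. A y x * u x * v y)"
    using assms unfolding symmetric_on_def by (intro sum.cong refl) (simp add: mult.commute)
  also have "\<dots> = inner_on X (mat_vec X A u) v"
    unfolding inner_on_def mat_vec_def by (simp add: sum_distrib_right)
  finally show ?thesis .
qed

section \<open>Eigenvalues of symmetric matrices\<close>

lemma is_eigenvalue_on_of_real: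
  assumes "eigenvector_on X A m p"
  shows "is_eigenvalue_on X A (complex_of_real m)"
  unfolding is_eigenvalue_on_def
proof (intro exI[of _ "\<lambda>x. complex_of_real (p x)"] conjI ballI)
  show "\<exists>x\<in>X. complex_of_real (p x) \<noteq> 0"
    using assms unfolding eigenvector_on_def by simp
next
  fix x assume "x \<in> X"
  then have "mat_vec X A p x = m * p x"
    using assms unfolding eigenvector_on_def by blast
  then show "(\<Sum>y\<in>X. complex_of_real (A x y) * complex_of_real (p y)) = complex_of_real m * complex_of_real (p x)"
    unfolding mat_vec_def of_real_mult[symmetric] of_real_sum[symmetric] by simp
qed

lemma finite_eigenvalues_on:
  assumes "finite X"
  shows "finite {mu. is_eigenvalue_on X A mu}"
proof -
  obtain xs where xs: "distinct xs" "set xs = X"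
    using finite_distinct_list[OF assms] by blast
  define n where "n = length xs"
  define M where "M = mat n n (\<lambda>(i, j). complex_of_real (A (xs ! i) (xs ! j)))"
  have M: "M \<in> carrier_mat n n"
    unfolding M_def by simp
  have bij: "bij_betw ((!) xs) {0..<n} X"
    using bij_betw_nth[OF xs(1) refl xs(2)[symmetric]] unfolding n_def by (simp add: atLeast0LessThan)
  have "{mu. is_eigenvalue_on X A mu} \<subseteq> {mu. poly (char_poly M) mu = 0}"
  proof
    fix mu assume "mu \<in> {mu. is_eigenvalue_on X A mu}"
    then obtain v where v0: "\<exists>x\<in>X. v x \<noteq> 0"
      and ev: "\<forall>x\<in>X. (\<Sum>y\<in>X. complex_of_real (A x y) * v y) = mu * v x"
      unfolding is_eigenvalue_on_def by blast
    define w where "w = vec n (\<lambda>i. v (xs ! i))"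
    have w: "w \<in> carrier_vec n"
      unfolding w_def by simp
    have "w \<noteq> 0\<^sub>v n"
    proof
      assume w0: "w = 0\<^sub>v n"
      from v0 obtain i where "i < n" "v (xs ! i) \<noteq> 0"
        using xs(2) unfolding n_def by (auto simp: in_set_conv_nth)
      with w0 show False
        unfolding w_def by (metis index_vec index_zero_vec(1))
    qed
    moreover have "M *\<^sub>v w = mu \<cdot>\<^sub>v w"
    proof (rule eq_vecI)
      fix i assume "i < dim_vec (mu \<cdot>\<^sub>v w)"
      then have i: "i < n"
        using w by simp
      have "(M *\<^sub>v w) $ i = (\<Sum>j\<in>{0..<n}. complex_of_real (A (xs ! i) (xs ! j)) * v (xs ! j))"
        using i M w unfolding M_def w_def by (simp add: scalar_prod_def)
      also have "\<dots> = (\<Sum>y\<in>X. complex_of_real (A (xs ! i) y) * v y)"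
        by (rule sum.reindex_bij_betw[OF bij])
      also have "\<dots> = (mu \<cdot>\<^sub>v w) $ i"
        using ev i xs(2) unfolding n_def w_def by auto
      finally show "(M *\<^sub>v w) $ i = (mu \<cdot>\<^sub>v w) $ i" .
    qed (use M w in simp)
    ultimately have "eigenvalue M mu"
      unfolding eigenvalue_def eigenvector_def using M w by auto
    then show "mu \<in> {mu. poly (char_poly M) mu = 0}"
      using eigenvalue_root_char_poly[OF M] by simp
  qed
  moreover have "char_poly M \<noteq> 0"
    using degree_monic_char_poly[OF M] by auto
  ultimately show ?thesis
    using poly_roots_finite finite_subset by blast
qed

text \<open>The real and imaginary parts \<open>a, b\<close> of a complex eigenvector satisfy
  \<open>A a = Re \<mu> a - Im \<mu> b\<close> and \<open>A b = Im \<mu> a + Re \<mu> b\<close>; pairing them through the symmetry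
  of \<open>A\<close> gives \<open>Im \<mu> (|a|\<^sup>2 + |b|\<^sup>2) = 0\<close>.\<close>
lemma symmetric_eigenvalue_real:
  assumes fin: "finite X" and sym: "symmetric_on X A" and ev: "is_eigenvalue_on X A mu"
  shows "\<exists>m p. mu = complex_of_real m \<and> eigenvector_on X A m p"
proof -
  obtain v where v0: "\<exists>x\<in>X. v x \<noteq> 0"
    and e: "\<forall>x\<in>X. (\<Sum>y\<in>X. complex_of_real (A x y) * v y) = mu * v x"
    using ev unfolding is_eigenvalue_on_def by blast
  define a where "a = (\<lambda>x. Re (v x))"
  define b where "b = (\<lambda>x. Im (v x))"
  have Aa: "mat_vec X A a x = Re mu * a x - Im mu * b x" if "x \<in> X" for x
  proof -
    have "Re (\<Sum>y\<in>X. complex_of_real (A x y) * v y) = Re (mu * v x)"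
      using e that by simp
    then show ?thesis
      unfolding a_def b_def mat_vec_def by (simp add: Re_sum)
  qed
  have Ab: "mat_vec X A b x = Im mu * a x + Re mu * b x" if "x \<in> X" for x
  proof -
    have "Im (\<Sum>y\<in>X. complex_of_real (A x y) * v y) = Im (mu * v x)"
      using e that by simp
    then show ?thesis
      unfolding a_def b_def mat_vec_def by (simp add: Im_sum)
  qed
  have "inner_on X b (mat_vec X A a) = inner_on X b (\<lambda>x. Re mu * a x - Im mu * b x)"
    using Aa by (intro inner_on_cong) auto
  also have "\<dots> = Re mu * inner_on X b a - Im mu * norm2_on X b"
    by (simp add: inner_on_diff_right inner_on_scale_right)
  finally have ba: "inner_on X b (mat_vec X A a) = Re mu * inner_on X b a - Im mu * norm2_on X b" .
  have "inner_on X (mat_vec X A b) a = inner_on X (\<lambda>x. Im mu * a x + Re mu * b x) a"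
    using Ab by (intro inner_on_cong) auto
  also have "\<dots> = Im mu * norm2_on X a + Re mu * inner_on X b a"
    by (simp add: inner_on_add_left inner_on_scale_left)
  finally have ab: "inner_on X (mat_vec X A b) a = Im mu * norm2_on X a + Re mu * inner_on X b a" .
  have "Im mu * (norm2_on X a + norm2_on X b) = 0"
    using ba ab inner_on_mat_vec_symmetric[OF sym, of b a] by (simp add: algebra_simps)
  moreover obtain x where x: "x \<in> X" "a x \<noteq> 0 \<or> b x \<noteq> 0"
    using v0 unfolding a_def b_def using complex_eq_iff by auto
  then have "norm2_on X a + norm2_on X b > 0"
    using norm2_on_pos_iff[OF fin, of a] norm2_on_pos_iff[OF fin, of b]
      norm2_on_nonneg[of X a] norm2_on_nonneg[of X b] by (metis add_nonneg_pos add_pos_nonneg)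
  ultimately have im: "Im mu = 0"
    by simp
  then have "mu = complex_of_real (Re mu)"
    by (simp add: complex_eqI)
  moreover have "eigenvector_on X A (Re mu) a \<or> eigenvector_on X A (Re mu) b"
    using x(2)
  proof
    assume "a x \<noteq> 0"
    then show ?thesis
      using x(1) Aa im unfolding eigenvector_on_def by auto
  next
    assume "b x \<noteq> 0"
    then show ?thesis
      using x(1) Ab im unfolding eigenvector_on_def by auto
  qed
  ultimately show ?thesis
    by blast
qed

lemma quadratic_form_add:
  "inner_on X (\<lambda>x. u x + t * v x) (mat_vec X A (\<lambda>x. u x + t * v x)) =
     inner_on X u (mat_vec X A u) + t * (inner_on X u (mat_vec X A v) + inner_on X v (mat_vec X A u))
     + t\<^sup>2 * inner_on X v (mat_vec X A v)"
  unfolding inner_on_def mat_vec_def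
  by (simp add: sum.distrib sum_distrib_left algebra_simps power2_eq_square)

lemma quadratic_form_scale:
  "inner_on X (\<lambda>x. c * u x) (mat_vec X A (\<lambda>x. c * u x)) = c\<^sup>2 * inner_on X u (mat_vec X A u)"
  by (simp add: mat_vec_scale inner_on_scale_left inner_on_scale_right power2_eq_square)

lemma norm2_on_add:
  "norm2_on X (\<lambda>x. u x + t * v x) = norm2_on X u + 2 * t * inner_on X u v + t\<^sup>2 * norm2_on X v"
  unfolding inner_on_def
  by (simp add: sum.distrib sum_distrib_left algebra_simps power2_eq_square)

text \<open>The cube condition follows from the norm condition; it is included because it makes
  compactness in the product topology immediate.\<close>
definition unit_sphere_on :: "'b set \<Rightarrow> ('b \<Rightarrow> real) set" where
  "unit_sphere_on X = {f \<in> PiE X (\<lambda>_. {-1..1}). norm2_on X f = 1}"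

lemma continuous_map_powertop_coordinate:
  "x \<in> X \<Longrightarrow> continuous_map (powertop_real X) euclideanreal (\<lambda>f. f x)"
  using continuous_map_product_projection[of x X "\<lambda>_. euclideanreal"] by simp

lemma compactin_unit_sphere_on:
  assumes fin: "finite X"
  shows "compactin (powertop_real X) (unit_sphere_on X)"
proof -
  have "unit_sphere_on X = {f \<in> topspace (powertop_real X). norm2_on X f \<in> {1}} \<inter> PiE X (\<lambda>_. {-1..1})"
    unfolding unit_sphere_on_def topspace_product_topology by auto
  also have "compactin (powertop_real X) \<dots>"
  proof (rule closed_Int_compactin)
    have "continuous_map (powertop_real X) euclideanreal (norm2_on X)"
      unfolding inner_on_def
      by (intro continuous_map_sum fin continuous_map_real_mult continuous_map_powertop_coordinate)
    then show "closedin (powertop_real X) {f \<in> topspace (powertop_real X). norm2_on X f \<in> {1}}"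
      by (intro closedin_continuous_map_preimage) auto
    show "compactin (powertop_real X) (PiE X (\<lambda>_. {-1..1}))"
      by (simp add: compactin_PiE compactin_euclidean_iff)
  qed
  finally show ?thesis .
qed

lemma normalize_in_unit_sphere_on:
  assumes fin: "finite X" and h: "0 < norm2_on X h"
  shows "restrict (\<lambda>x. h x / sqrt (norm2_on X h)) X \<in> unit_sphere_on X"
proof -
  define s where "s = sqrt (norm2_on X h)"
  have s: "0 < s" "s\<^sup>2 = norm2_on X h"
    unfolding s_def using h by auto
  have bound: "\<bar>h x\<bar> \<le> s" if "x \<in> X" for x
  proof -
    have "(h x)\<^sup>2 \<le> norm2_on X h"
      unfolding inner_on_def power2_eq_square by (rule member_le_sum[OF that _ fin]) simp
    then show ?thesis
      unfolding s_def by (simp add: real_le_rsqrt)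
  qed
  have "h x / s \<in> {-1..1}" if "x \<in> X" for x
    using bound[OF that] s(1) by (simp add: abs_le_iff divide_le_eq_1_pos le_divide_eq)
  moreover have "norm2_on X (restrict (\<lambda>x. h x / s) X) = norm2_on X h / s\<^sup>2"
    unfolding inner_on_def by (simp add: sum_divide_distrib power2_eq_square)
  ultimately show ?thesis
    unfolding unit_sphere_on_def s_def[symmetric] using s h by (simp add: restrict_PiE_iff)
qed

lemma quadratic_form_max_on_sphere:
  assumes fin: "finite X" and ne: "X \<noteq> {}"
  obtains f where "norm2_on X f = 1"
    and "\<And>h. inner_on X h (mat_vec X A h) \<le> inner_on X f (mat_vec X A f) * norm2_on X h"
proof -
  let ?q = "\<lambda>h. inner_on X h (mat_vec X A h)"
  have "continuous_map (powertop_real X) euclideanreal ?q"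
    unfolding inner_on_def mat_vec_def
    by (intro continuous_map_sum fin continuous_map_real_mult continuous_map_powertop_coordinate
        continuous_map_const[THEN iffD2]) auto
  then have compact: "compact (?q ` unit_sphere_on X)"
    using image_compactin[OF compactin_unit_sphere_on[OF fin]] compactin_euclidean_iff by blast
  have "0 < norm2_on X (\<lambda>_. 1)"
    using fin ne by (simp add: inner_on_def card_gt_0_iff)
  then have "?q ` unit_sphere_on X \<noteq> {}"
    using normalize_in_unit_sphere_on[OF fin] by blast
  then obtain f where f: "f \<in> unit_sphere_on X" and max: "\<And>g. g \<in> unit_sphere_on X \<Longrightarrow> ?q g \<le> ?q f"
    using compact_attains_sup[OF compact] by blast
  have "?q h \<le> ?q f * norm2_on X h" for h
  proof (cases "norm2_on X h = 0")
    case True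
    then show ?thesis
      using norm2_on_eq_0_iff[OF fin] by (simp add: inner_on_def)
  next
    case False
    define s where "s = sqrt (norm2_on X h)"
    have h: "0 < norm2_on X h" "s\<^sup>2 = norm2_on X h"
      using False norm2_on_nonneg[of X h] unfolding s_def by auto
    have "?q h / norm2_on X h = ?q (\<lambda>x. (1 / s) * h x)"
      unfolding quadratic_form_scale h(2)[symmetric] by (simp add: power_one_over)
    also have "\<dots> = ?q (restrict (\<lambda>x. h x / s) X)"
      by (intro inner_on_cong mat_vec_cong) simp_all
    also have "?q (restrict (\<lambda>x. h x / s) X) \<le> ?q f"
      using max normalize_in_unit_sphere_on[OF fin h(1)] unfolding s_def by blast
    finally show ?thesis
      using h(1) by (simp add: pos_divide_le_eq)
  qed
  moreover have "norm2_on X f = 1"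
    using f unfolding unit_sphere_on_def by simp
  ultimately show thesis
    using that by blast
qed

lemma nonpos_of_le_mult_all_pos:
  fixes a c :: real
  assumes "\<And>t. 0 < t \<Longrightarrow> a \<le> t * c"
  shows "a \<le> 0"
proof (rule ccontr)
  assume "\<not> a \<le> 0"
  define t where "t = a / (\<bar>c\<bar> + 1)"
  have t: "0 < t"
    unfolding t_def using \<open>\<not> a \<le> 0\<close> by simp
  have "a \<le> t * c"
    using assms[OF t] .
  also have "\<dots> \<le> t * \<bar>c\<bar>"
    using t by (simp add: mult_left_mono)
  also have "\<dots> < a"
    unfolding t_def using \<open>\<not> a \<le> 0\<close> by (simp add: divide_less_eq field_simps)
  finally show False
    by simp
qed

text \<open>Perturbing a maximiser \<open>f\<close> of the Rayleigh quotient in the direction of the residual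
  \<open>w = A f - l f\<close> gives \<open>2 t |w|\<^sup>2 \<le> t\<^sup>2 c\<close> for all \<open>t\<close> and a constant \<open>c\<close>, forcing \<open>w = 0\<close>.\<close>
lemma rayleigh_maximizer_eigenvector:
  assumes fin: "finite X" and sym: "symmetric_on X A"
    and max: "\<And>h. inner_on X h (mat_vec X A h) \<le> l * norm2_on X h"
    and f: "inner_on X f (mat_vec X A f) = l * norm2_on X f"
    and x: "x \<in> X"
  shows "mat_vec X A f x = l * f x"
proof -
  define w where "w y = mat_vec X A f y - l * f y" for y
  define c where "c = l * norm2_on X w - inner_on X w (mat_vec X A w)"
  have "inner_on X w (mat_vec X A f) - l * inner_on X f w = (\<Sum>y\<in>X. w y * mat_vec X A f y - l * (f y * w y))"
    unfolding inner_on_def by (simp add: sum_subtractf sum_distrib_left)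
  also have "\<dots> = norm2_on X w"
    unfolding inner_on_def by (intro sum.cong) (simp_all add: w_def algebra_simps)
  finally have residual: "inner_on X w (mat_vec X A f) - l * inner_on X f w = norm2_on X w" .
  have "2 * norm2_on X w \<le> t * c" if t: "0 < t" for t
  proof -
    have "inner_on X (\<lambda>x. f x + t * w x) (mat_vec X A (\<lambda>x. f x + t * w x))
        \<le> l * norm2_on X (\<lambda>x. f x + t * w x)"
      by (rule max)
    then have "t * (2 * norm2_on X w) \<le> t * (t * c)"
      unfolding quadratic_form_add norm2_on_add c_def f
        inner_on_mat_vec_symmetric[OF sym, of f w] inner_on_commute[of X "mat_vec X A f" w]
      using residual by (simp add: algebra_simps power2_eq_square)
    then show ?thesis
      using t by simp
  qed
  then have "2 * norm2_on X w \<le> 0"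
    by (rule nonpos_of_le_mult_all_pos)
  then have "w x = 0"
    using norm2_on_eq_0_iff[OF fin, of w] norm2_on_nonneg[of X w] x by simp
  then show ?thesis
    unfolding w_def by simp
qed

lemma symmetric_eigenvalue_ge_rayleigh:
  assumes fin: "finite X" and sym: "symmetric_on X A"
    and u: "0 < norm2_on X u" and le: "c * norm2_on X u \<le> inner_on X u (mat_vec X A u)"
  shows "\<exists>l p. c \<le> l \<and> eigenvector_on X A l p"
proof -
  have "X \<noteq> {}"
    using u norm2_on_pos_iff[OF fin] by auto
  then obtain f where f: "norm2_on X f = 1"
    and max: "\<And>h. inner_on X h (mat_vec X A h) \<le> inner_on X f (mat_vec X A f) * norm2_on X h"
    using quadratic_form_max_on_sphere[OF fin] by blast
  define l where "l = inner_on X f (mat_vec X A f)"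
  have "eigenvector_on X A l f"
    unfolding eigenvector_on_def
  proof
    show "\<exists>x\<in>X. f x \<noteq> 0"
      using f norm2_on_pos_iff[OF fin, of f] by simp
    show "\<forall>x\<in>X. mat_vec X A f x = l * f x"
      using rayleigh_maximizer_eigenvector[OF fin sym, of l f] max f
      unfolding l_def by (simp add: mult.commute)
  qed
  moreover have "c * norm2_on X u \<le> l * norm2_on X u"
    using le max[of u] unfolding l_def by linarith
  then have "c \<le> l"
    using u by (rule mult_right_le_imp_le)
  ultimately show ?thesis
    by blast
qed

lemma symmetric_eigenvalue_ge_diag:
  assumes fin: "finite X" and sym: "symmetric_on X A" and x0: "x0 \<in> X"
  shows "\<exists>l p. A x0 x0 \<le> l \<and> eigenvector_on X A l p"
proof (rule symmetric_eigenvalue_ge_rayleigh[OF fin sym])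
  define e where "e x = (if x = x0 then 1 else 0 :: real)" for x
  have pick: "(\<Sum>y\<in>X. g y * e y) = g x0" for g :: "_ \<Rightarrow> real"
  proof -
    have "(\<Sum>y\<in>X. g y * e y) = (\<Sum>y\<in>X. if y = x0 then g y else 0)"
      unfolding e_def by (intro sum.cong) auto
    then show ?thesis
      using fin x0 by simp
  qed
  have "norm2_on X e = e x0"
    unfolding inner_on_def by (rule pick)
  moreover have "mat_vec X A e x = A x x0" for x
    unfolding mat_vec_def by (rule pick)
  then have "inner_on X e (mat_vec X A e) = (\<Sum>x\<in>X. A x x0 * e x)"
    unfolding inner_on_def by (simp add: mult.commute)
  then have "inner_on X e (mat_vec X A e) = A x0 x0"
    using pick by simp
  ultimately have "norm2_on X e = 1" "inner_on X e (mat_vec X A e) = A x0 x0"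
    by (simp_all add: e_def)
  then show "0 < norm2_on X e" "A x0 x0 * norm2_on X e \<le> inner_on X e (mat_vec X A e)"
    by simp_all
qed

lemma largest_eigenvalue_on_ge:
  assumes fin: "finite X" and p: "eigenvector_on X A l p"
  shows "l \<le> largest_eigenvalue_on X A"
  unfolding largest_eigenvalue_on_def
proof (rule Max_ge)
  have "{r. is_eigenvalue_on X A (complex_of_real r)} = of_real -` {mu. is_eigenvalue_on X A mu}"
    by auto
  then show "finite {r. is_eigenvalue_on X A (complex_of_real r)}"
    using finite_vimageI[OF finite_eigenvalues_on[OF fin] inj_of_real] by simp
  show "l \<in> {r. is_eigenvalue_on X A (complex_of_real r)}"
    using is_eigenvalue_on_of_real[OF p] by simp
qed

lemma spectral_radius_on_symmetric:
  assumes fin: "finite X" and ne: "X \<noteq> {}" and sym: "symmetric_on X A"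
  obtains m p where "eigenvector_on X A m p" and "spectral_radius_on X A = \<bar>m\<bar>"
proof -
  define S where "S = {cmod mu | mu. is_eigenvalue_on X A mu}"
  have "S = cmod ` {mu. is_eigenvalue_on X A mu}"
    unfolding S_def by auto
  then have "finite S"
    using finite_eigenvalues_on[OF fin] by simp
  moreover obtain l q where "eigenvector_on X A l q"
    using symmetric_eigenvalue_ge_diag[OF fin sym] ne by blast
  then have "S \<noteq> {}"
    unfolding S_def using is_eigenvalue_on_of_real by blast
  ultimately have "Max S \<in> S"
    by (rule Max_in)
  then obtain mu where mu: "is_eigenvalue_on X A mu" "spectral_radius_on X A = cmod mu"
    unfolding spectral_radius_on_def S_def[symmetric] by (auto simp: S_def)
  then obtain m p where "mu = complex_of_real m" "eigenvector_on X A m p"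
    using symmetric_eigenvalue_real[OF fin sym] by blast
  then show thesis
    using that mu by simp
qed

section \<open>Squares of symmetric and bipartite matrices\<close>

lemma norm2_mat_vec_le_abs:
  "norm2_on X (mat_vec X A u) \<le> norm2_on X (mat_vec X (\<lambda>x y. \<bar>A x y\<bar>) (\<lambda>x. \<bar>u x\<bar>))"
  unfolding inner_on_def
proof (rule sum_mono)
  fix x
  let ?a = "mat_vec X A u x" and ?b = "mat_vec X (\<lambda>x y. \<bar>A x y\<bar>) (\<lambda>x. \<bar>u x\<bar>) x"
  have "\<bar>?a\<bar> \<le> ?b"
    unfolding mat_vec_def using sum_abs[of "\<lambda>y. A x y * u y" X] by (simp add: abs_mult)
  then have "\<bar>?a\<bar> \<le> \<bar>?b\<bar>"
    using abs_ge_self order_trans by blast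
  then show "?a * ?a \<le> ?b * ?b"
    using abs_le_square_iff[of ?a ?b] by (simp add: power2_eq_square)
qed

lemma symmetric_on_mat_mult_self:
  assumes "symmetric_on X D"
  shows "symmetric_on X (mat_mult_on X D D)"
  using assms unfolding symmetric_on_def mat_mult_on_def by (auto simp: mult.commute intro!: sum.cong)

lemma norm2_mat_vec_square_eigenvector:
  assumes sym: "symmetric_on X D" and p: "eigenvector_on X (mat_mult_on X D D) m p"
  shows "norm2_on X (mat_vec X D p) = m * norm2_on X p"
proof -
  have "norm2_on X (mat_vec X D p) = inner_on X p (mat_vec X D (mat_vec X D p))"
    using inner_on_mat_vec_symmetric[OF sym, of p "mat_vec X D p"] by simp
  also have "\<dots> = inner_on X p (\<lambda>x. m * p x)"
    using p by (intro inner_on_cong) (simp_all add: eigenvector_on_def mat_vec_mat_mult_on)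
  finally show ?thesis
    by (simp add: inner_on_scale_right)
qed

lemma square_eigenvalue_nonneg:
  assumes fin: "finite X" and sym: "symmetric_on X D" and p: "eigenvector_on X (mat_mult_on X D D) m p"
  shows "0 \<le> m"
proof -
  have "0 \<le> m * norm2_on X p"
    using norm2_on_nonneg[of X "mat_vec X D p"] unfolding norm2_mat_vec_square_eigenvector[OF sym p] .
  moreover have "0 < norm2_on X p"
    using p norm2_on_pos_iff[OF fin] unfolding eigenvector_on_def by blast
  ultimately show ?thesis
    by (simp add: zero_le_mult_iff)
qed

definition bipartite_on :: "'b set \<Rightarrow> 'b set \<Rightarrow> ('b \<Rightarrow> 'b \<Rightarrow> real) \<Rightarrow> bool" where
  "bipartite_on X S A \<longleftrightarrow> (\<forall>x\<in>X. \<forall>y\<in>X. A x y \<noteq> 0 \<longrightarrow> (x \<in> S \<longleftrightarrow> y \<notin> S))"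

lemma bipartite_on_mat_vec_vanishes:
  assumes bip: "bipartite_on X S A" and f: "\<forall>y\<in>X - S. f y = 0" and x: "x \<in> X \<inter> S"
  shows "mat_vec X A f x = 0"
  unfolding mat_vec_def
proof (rule sum.neutral, rule ballI)
  fix y assume y: "y \<in> X"
  show "A x y * f y = 0"
  proof (cases "A x y = 0")
    case False
    then have "y \<notin> S"
      using bip x y unfolding bipartite_on_def by blast
    then show ?thesis
      using f y by simp
  qed simp
qed

lemma bipartite_on_mat_vec_vanishes_compl:
  assumes bip: "bipartite_on X S A" and f: "\<forall>y\<in>X \<inter> S. f y = 0" and x: "x \<in> X - S"
  shows "mat_vec X A f x = 0"
proof (rule bipartite_on_mat_vec_vanishes)
  show "bipartite_on X (X - S) A"
    using bip unfolding bipartite_on_def by blast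
qed (use f x in auto)

lemma bipartite_on_square_entry:
  assumes bip: "bipartite_on X S D" and xy: "x \<in> X" "y \<in> X" "x \<in> S \<longleftrightarrow> y \<notin> S"
  shows "mat_mult_on X D D x y = 0"
  unfolding mat_mult_on_def
proof (rule sum.neutral, rule ballI)
  fix z assume z: "z \<in> X"
  show "D x z * D z y = 0"
  proof (rule ccontr)
    assume "D x z * D z y \<noteq> 0"
    then have "x \<in> S \<longleftrightarrow> z \<notin> S" "z \<in> S \<longleftrightarrow> y \<notin> S"
      using bip xy(1,2) z unfolding bipartite_on_def by auto
    then show False
      using xy(3) by blast
  qed
qed

lemma bipartite_square_mat_vec_restrict:
  assumes bip: "bipartite_on X S D" and x: "x \<in> X"
  shows "mat_vec X (mat_mult_on X D D) (\<lambda>y. if y \<in> S then p y else 0) x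
    = (if x \<in> S then mat_vec X (mat_mult_on X D D) p x else 0)"
proof -
  have "mat_vec X (mat_mult_on X D D) (\<lambda>y. if y \<in> S then p y else 0) x
      = (\<Sum>y\<in>X. if x \<in> S then mat_mult_on X D D x y * p y else 0)"
    unfolding mat_vec_def
  proof (rule sum.cong[OF refl])
    fix y assume "y \<in> X"
    then show "mat_mult_on X D D x y * (if y \<in> S then p y else 0)
        = (if x \<in> S then mat_mult_on X D D x y * p y else 0)"
      using bipartite_on_square_entry[OF bip x] by (cases "x \<in> S"; cases "y \<in> S") simp_all
  qed
  then show ?thesis
    unfolding mat_vec_def by simp
qed

text \<open>Either the part of \<open>p\<close> on \<open>S\<close> is nonzero, and it is again an eigenvector, or \<open>p\<close> lives
  on the other side and then \<open>D p\<close> is an eigenvector on \<open>S\<close>.\<close>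
lemma bipartite_square_eigenvector_on_side:
  assumes bip: "bipartite_on X S D" and m: "m \<noteq> 0"
    and p: "eigenvector_on X (mat_mult_on X D D) m p"
  obtains u where "eigenvector_on X (mat_mult_on X D D) m u" and "\<forall>x\<in>X - S. u x = 0"
proof (cases "\<exists>x\<in>X \<inter> S. p x \<noteq> 0")
  case True
  define u where "u x = (if x \<in> S then p x else 0)" for x
  have "eigenvector_on X (mat_mult_on X D D) m u"
    using True p unfolding eigenvector_on_def u_def by (auto simp: bipartite_square_mat_vec_restrict[OF bip])
  moreover have "\<forall>x\<in>X - S. u x = 0"
    unfolding u_def by simp
  ultimately show thesis
    using that by blast
next
  case False
  define u where "u = mat_vec X D p"
  have Dp: "mat_vec X D u x = m * p x" if "x \<in> X" for x
    using p that unfolding u_def eigenvector_on_def mat_vec_mat_mult_on by blast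
  have "mat_vec X (mat_mult_on X D D) u x = m * u x" for x
  proof -
    have "mat_vec X (mat_mult_on X D D) u x = mat_vec X D (\<lambda>y. m * p y) x"
      unfolding mat_vec_mat_mult_on using Dp by (intro mat_vec_cong) (simp add: u_def)
    then show ?thesis
      unfolding u_def by (simp add: mat_vec_scale)
  qed
  moreover obtain x where x: "x \<in> X" "p x \<noteq> 0"
    using p unfolding eigenvector_on_def by blast
  have "\<exists>y\<in>X. u y \<noteq> 0"
  proof (rule ccontr)
    assume "\<not> ?thesis"
    then have "mat_vec X D u x = 0"
      unfolding mat_vec_def by simp
    then show False
      using Dp[OF x(1)] x(2) m by simp
  qed
  ultimately have "eigenvector_on X (mat_mult_on X D D) m u"
    unfolding eigenvector_on_def by blast
  moreover have "\<forall>x\<in>X - S. u x = 0"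
    unfolding u_def using bipartite_on_mat_vec_vanishes_compl[OF bip] False by blast
  ultimately show thesis
    using that by blast
qed

section \<open>Oriented graphs\<close>

definition dirac :: "'a set set \<Rightarrow> ('a set \<Rightarrow> 'a) \<Rightarrow> 'a set \<Rightarrow> 'a set \<Rightarrow> real" where
  "dirac E head x y = ext_d E head x y + ext_d E head y x"

definition incidence :: "'a set set \<Rightarrow> ('a set \<Rightarrow> 'a) \<Rightarrow> 'a set \<Rightarrow> 'a set \<Rightarrow> real" where
  "incidence E head x y = \<bar>dirac E head x y\<bar>"

lemma hodge_eq_dirac_square: "hodge V E head = mat_mult_on (simplices V E) (dirac E head) (dirac E head)"
  unfolding hodge_def dirac_def by (simp add: Let_def)

lemma symmetric_dirac: "symmetric_on X (dirac E head)"
  unfolding symmetric_on_def dirac_def by simp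

lemma incidence_commute: "incidence E head x y = incidence E head y x"
  unfolding incidence_def dirac_def by (simp add: add.commute)

lemma symmetric_incidence: "symmetric_on X (incidence E head)"
  unfolding symmetric_on_def using incidence_commute by blast

lemma symmetric_conn_adj: "symmetric_on X conn_adj"
  unfolding symmetric_on_def conn_adj_def by (auto simp: Int_commute)

locale oriented_graph =
  fixes V :: "'a set" and E :: "'a set set" and head :: "'a set \<Rightarrow> 'a"
  assumes simple: "simple_graph V E" and oriented: "orientation E head"
begin

lemma edgeE:
  assumes "e \<in> E"
  obtains a b where "a \<in> V" "b \<in> V" "a \<noteq> b" "e = {a, b}"
  using simple assms unfolding simple_graph_def by blast

lemma edge_ne_singleton: "e \<in> E \<Longrightarrow> e \<noteq> {a}"
  by (metis edgeE doubleton_eq_iff insert_absorb2)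

lemma head_in_edge: "e \<in> E \<Longrightarrow> head e \<in> e"
  using oriented unfolding orientation_def by blast

lemma finite_simplices: "finite (simplices V E)"
proof -
  have "finite V"
    using simple unfolding simple_graph_def by blast
  moreover have "E \<subseteq> Pow V"
    by (auto elim: edgeE)
  ultimately show ?thesis
    unfolding simplices_def by (simp add: finite_subset)
qed

lemma simplex_vertexE:
  assumes "x \<in> simplices V E" "x \<notin> E"
  obtains a where "a \<in> V" "x = {a}"
  using assms unfolding simplices_def by auto

lemma incidence_edge: "e \<in> E \<Longrightarrow> incidence E head e t = (if \<exists>a\<in>e. t = {a} then 1 else 0)"
  using edge_ne_singleton head_in_edge[of e] unfolding incidence_def dirac_def ext_d_def by auto

lemma dirac_nonzero:
  "dirac E head x y \<noteq> 0 \<Longrightarrow> (x \<in> E \<and> (\<exists>a\<in>x. y = {a})) \<or> (y \<in> E \<and> (\<exists>a\<in>y. x = {a}))"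
  using head_in_edge unfolding dirac_def ext_d_def by (auto split: if_splits)

lemma bipartite_dirac: "bipartite_on X E (dirac E head)"
  unfolding bipartite_on_def using dirac_nonzero edge_ne_singleton by blast

lemma bipartite_incidence: "bipartite_on X E (incidence E head)"
  using bipartite_dirac unfolding bipartite_on_def incidence_def by simp

lemma incidence_square_edges:
  assumes e: "e \<in> E" and f: "f \<in> E"
  shows "mat_mult_on (simplices V E) (incidence E head) (incidence E head) e f = real (card (e \<inter> f))"
proof -
  let ?S = "(\<lambda>a. {a}) ` (e \<inter> f)"
  have "mat_mult_on (simplices V E) (incidence E head) (incidence E head) e f
      = (\<Sum>t\<in>simplices V E. if t \<in> ?S then 1 else 0)"
    unfolding mat_mult_on_def
    by (intro sum.cong refl) (auto simp: incidence_edge[OF e] incidence_commute[of E head _ f] incidence_edge[OF f])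
  also have "\<dots> = real (card (simplices V E \<inter> ?S))"
    using finite_simplices by (simp add: sum.If_cases)
  also have "simplices V E \<inter> ?S = ?S"
    using e by (auto elim!: edgeE simp: simplices_def)
  also have "card ?S = card (e \<inter> f)"
    by (rule card_image) (auto simp: inj_on_def)
  finally show ?thesis .
qed

lemma conn_adj_edges:
  assumes e: "e \<in> E" and f: "f \<in> E"
  shows "conn_adj e f = real (card (e \<inter> f)) - (if e = f then 2 else 0)"
proof -
  obtain a b where ab: "a \<noteq> b" "e = {a, b}"
    using e by (rule edgeE)
  obtain c d where cd: "c \<noteq> d" "f = {c, d}"
    using f by (rule edgeE)
  show ?thesis
    unfolding conn_adj_def ab cd using ab(1) cd(1)
    by (cases "a = c"; cases "a = d"; cases "b = c"; cases "b = d") (auto simp: insert_commute)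
qed

lemma conn_adj_eq_incidence:
  assumes x: "x \<in> simplices V E" and y: "y \<in> simplices V E"
  shows "conn_adj x y = incidence E head x y +
    (if x \<in> E \<and> y \<in> E
     then mat_mult_on (simplices V E) (incidence E head) (incidence E head) x y - (if x = y then 2 else 0)
     else 0)"
proof (cases "x \<in> E"; cases "y \<in> E")
  assume "x \<in> E" "y \<in> E"
  then show ?thesis
    using incidence_edge incidence_square_edges conn_adj_edges edge_ne_singleton by simp
next
  assume "x \<in> E" "y \<notin> E"
  then show ?thesis
    using incidence_edge edge_ne_singleton
    by (auto elim!: simplex_vertexE[OF y] simp: conn_adj_def)
next
  assume "x \<notin> E" "y \<in> E"
  then show ?thesis
    using incidence_edge[of y x] edge_ne_singleton
    by (auto elim!: simplex_vertexE[OF x] simp: conn_adj_def incidence_commute[of E head x y])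
next
  assume "x \<notin> E" "y \<notin> E"
  then have "incidence E head x y = 0"
    using bipartite_incidence[of "simplices V E"] x y unfolding bipartite_on_def by blast
  moreover obtain a b where "x = {a}" "y = {b}"
    using simplex_vertexE[OF x \<open>x \<notin> E\<close>] simplex_vertexE[OF y \<open>y \<notin> E\<close>] by metis
  then have "conn_adj x y = 0"
    by (auto simp: conn_adj_def)
  ultimately show ?thesis
    using \<open>x \<notin> E\<close> by simp
qed

lemma conn_adj_mat_vec:
  assumes x: "x \<in> simplices V E"
  shows "mat_vec (simplices V E) conn_adj f x = mat_vec (simplices V E) (incidence E head) f x +
    (if x \<in> E
     then mat_vec (simplices V E) (incidence E head)
            (mat_vec (simplices V E) (incidence E head) (\<lambda>y. if y \<in> E then f y else 0)) x - 2 * f x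
     else 0)"
proof (cases "x \<in> E")
  case False
  then show ?thesis
    unfolding mat_vec_def by (simp add: conn_adj_eq_incidence[OF x])
next
  case True
  let ?X = "simplices V E" and ?B = "incidence E head"
  let ?fE = "\<lambda>y. if y \<in> E then f y else 0"
  have "mat_vec ?X conn_adj f x
      = (\<Sum>y\<in>?X. ?B x y * f y + mat_mult_on ?X ?B ?B x y * ?fE y - (if x = y then 2 * f y else 0))"
    unfolding mat_vec_def
  proof (rule sum.cong[OF refl])
    fix y assume y: "y \<in> ?X"
    show "conn_adj x y * f y = ?B x y * f y + mat_mult_on ?X ?B ?B x y * ?fE y - (if x = y then 2 * f y else 0)"
      unfolding conn_adj_eq_incidence[OF x y] using True
      by (cases "y \<in> E"; cases "x = y") (simp_all add: algebra_simps)
  qed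
  also have "\<dots> = mat_vec ?X ?B f x + mat_vec ?X (mat_mult_on ?X ?B ?B) ?fE x - 2 * f x"
    unfolding mat_vec_def using finite_simplices x by (simp add: sum.distrib sum_subtractf)
  finally show ?thesis
    using True by (simp add: mat_vec_mat_mult_on)
qed

lemma incidence_mat_vec_sides:
  assumes w: "\<forall>x\<in>simplices V E - E. w x = 0"
  defines "z \<equiv> mat_vec (simplices V E) (incidence E head) w"
  shows "\<forall>x\<in>simplices V E \<inter> E. z x = 0"
    and "\<forall>x\<in>simplices V E - E. mat_vec (simplices V E) (incidence E head) z x = 0"
proof -
  show z: "\<forall>x\<in>simplices V E \<inter> E. z x = 0"
    unfolding z_def using bipartite_on_mat_vec_vanishes[OF bipartite_incidence w] by blast
  show "\<forall>x\<in>simplices V E - E. mat_vec (simplices V E) (incidence E head) z x = 0"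
    using bipartite_on_mat_vec_vanishes_compl[OF bipartite_incidence z] by blast
qed

lemma conn_adj_mat_vec_test_vector:
  assumes w: "\<forall>x\<in>simplices V E - E. w x = 0" and x: "x \<in> simplices V E"
  defines "z \<equiv> mat_vec (simplices V E) (incidence E head) w"
  shows "mat_vec (simplices V E) conn_adj (\<lambda>x. w x + c * z x) x
    = z x + (1 + c) * mat_vec (simplices V E) (incidence E head) z x - 2 * w x"
proof -
  let ?X = "simplices V E" and ?B = "mat_vec (simplices V E) (incidence E head)"
  note z = incidence_mat_vec_sides[OF w, folded z_def]
  have "(if y \<in> E then w y + c * z y else 0) = w y" if "y \<in> ?X" for y
    using w z that by (cases "y \<in> E") auto
  then have "?B (\<lambda>y. if y \<in> E then w y + c * z y else 0) y = z y" for y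
    unfolding z_def by (rule mat_vec_cong)
  then have "?B (?B (\<lambda>y. if y \<in> E then w y + c * z y else 0)) x = ?B z x"
    by (intro mat_vec_cong) simp
  moreover have "?B (\<lambda>x. w x + c * z x) x = z x + c * ?B z x"
    by (simp add: mat_vec_add mat_vec_scale z_def)
  ultimately show ?thesis
    using conn_adj_mat_vec[OF x, of "\<lambda>x. w x + c * z x"] w z x
    by (cases "x \<in> E") (simp_all add: algebra_simps)
qed

text \<open>Here \<open>w\<close> lives on the edges, \<open>B w\<close> on the vertices and \<open>B\<^sup>2 w\<close> again on the edges, so all
  cross terms except \<open>\<langle>w, B (B w)\<rangle> = |B w|\<^sup>2\<close> vanish.\<close>
lemma conn_adj_quadratic_form:
  assumes w: "\<forall>x\<in>simplices V E - E. w x = 0"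
  defines "z \<equiv> mat_vec (simplices V E) (incidence E head) w"
  shows "inner_on (simplices V E) (\<lambda>x. w x + c * z x) (mat_vec (simplices V E) conn_adj (\<lambda>x. w x + c * z x))
       = (1 + 2 * c) * norm2_on (simplices V E) z - 2 * norm2_on (simplices V E) w"
    and "norm2_on (simplices V E) (\<lambda>x. w x + c * z x)
       = norm2_on (simplices V E) w + c\<^sup>2 * norm2_on (simplices V E) z"
proof -
  let ?X = "simplices V E" and ?B = "mat_vec (simplices V E) (incidence E head)"
  note z = incidence_mat_vec_sides[OF w, folded z_def]
  have wz: "inner_on ?X w z = 0"
    using w z by (intro inner_on_disjoint_support) auto
  have "inner_on ?X (\<lambda>x. w x + c * z x) (mat_vec ?X conn_adj (\<lambda>x. w x + c * z x))
      = inner_on ?X (\<lambda>x. w x + c * z x) (\<lambda>x. z x + (1 + c) * ?B z x - 2 * w x)"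
    using conn_adj_mat_vec_test_vector[OF w, folded z_def] by (intro inner_on_cong) simp_all
  also have "\<dots> = (1 + c) * inner_on ?X w (?B z) - 2 * norm2_on ?X w + c * norm2_on ?X z
      + c * (1 + c) * inner_on ?X z (?B z)"
    using wz by (simp add: inner_on_add_left inner_on_add_right inner_on_diff_right
        inner_on_scale_left inner_on_scale_right inner_on_commute[of ?X z w] distrib_left distrib_right)
  also have "inner_on ?X w (?B z) = norm2_on ?X z"
    unfolding z_def by (simp add: inner_on_mat_vec_symmetric[OF symmetric_incidence])
  also have "inner_on ?X z (?B z) = 0"
    using z by (intro inner_on_disjoint_support) auto
  finally show "inner_on ?X (\<lambda>x. w x + c * z x) (mat_vec ?X conn_adj (\<lambda>x. w x + c * z x))
      = (1 + 2 * c) * norm2_on ?X z - 2 * norm2_on ?X w"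
    by (simp add: algebra_simps)
  show "norm2_on ?X (\<lambda>x. w x + c * z x) = norm2_on ?X w + c\<^sup>2 * norm2_on ?X z"
    using wz by (simp add: norm2_on_add)
qed

lemma connection_eigenvalue_ge:
  assumes l: "0 < l"
    and p: "eigenvector_on (simplices V E) (hodge V E head) ((1 + l) - 1 / (1 + l)) p"
  shows "\<exists>l' q. l \<le> l' \<and> eigenvector_on (simplices V E) conn_adj l' q"
proof -
  let ?X = "simplices V E" and ?D = "dirac E head"
  define m where "m = (1 + l) - 1 / (1 + l)"
  have "1 / (1 + l) < 1"
    using l by simp
  then have m: "0 < m"
    unfolding m_def using l by linarith
  have "eigenvector_on ?X (mat_mult_on ?X ?D ?D) m p"
    using p unfolding m_def hodge_eq_dirac_square .
  then obtain u where u: "eigenvector_on ?X (mat_mult_on ?X ?D ?D) m u" and uE: "\<forall>x\<in>?X - E. u x = 0"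
    using bipartite_square_eigenvector_on_side[OF bipartite_dirac] m by (metis less_irrefl)
  define w where "w x = \<bar>u x\<bar>" for x
  define z where "z = mat_vec ?X (incidence E head) w"
  have wE: "\<forall>x\<in>?X - E. w x = 0"
    using uE unfolding w_def by simp
  have W: "0 < norm2_on ?X w"
    using u norm2_on_pos_iff[OF finite_simplices] unfolding w_def eigenvector_on_def by simp
  have "m * norm2_on ?X w = norm2_on ?X (mat_vec ?X ?D u)"
    unfolding w_def norm2_on_abs norm2_mat_vec_square_eigenvector[OF symmetric_dirac u] ..
  also have "\<dots> \<le> norm2_on ?X z"
    unfolding z_def w_def incidence_def by (rule norm2_mat_vec_le_abs)
  finally have Z: "m * norm2_on ?X w \<le> norm2_on ?X z" .
  define y where "y x = w x + (1 / l) * z x" for x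
  have Q: "inner_on ?X y (mat_vec ?X conn_adj y) = (1 + 2 * (1 / l)) * norm2_on ?X z - 2 * norm2_on ?X w"
    and N: "norm2_on ?X y = norm2_on ?X w + (1 / l)\<^sup>2 * norm2_on ?X z"
    unfolding y_def z_def by (rule conn_adj_quadratic_form[OF wE])+
  have "0 < norm2_on ?X y"
    unfolding N using W norm2_on_nonneg[of ?X z] by (simp add: add_pos_nonneg)
  moreover have "l * norm2_on ?X y \<le> inner_on ?X y (mat_vec ?X conn_adj y)"
    unfolding Q N using add_one_minus_inverse_rayleigh_bound[OF l m_def Z] .
  ultimately show ?thesis
    by (rule symmetric_eigenvalue_ge_rayleigh[OF finite_simplices symmetric_conn_adj])
qed

lemma symmetric_hodge: "symmetric_on (simplices V E) (hodge V E head)"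
  unfolding hodge_eq_dirac_square by (rule symmetric_on_mat_mult_self[OF symmetric_dirac])

lemma hodge_eigenvalue_nonneg: "eigenvector_on (simplices V E) (hodge V E head) m p \<Longrightarrow> 0 \<le> m"
  unfolding hodge_eq_dirac_square by (rule square_eigenvalue_nonneg[OF finite_simplices symmetric_dirac])

lemma hodge_eigenvalue_le:
  assumes p: "eigenvector_on (simplices V E) (hodge V E head) m p"
  defines "r \<equiv> largest_eigenvalue_on (simplices V E) conn_adj"
  shows "m \<le> (1 + r) - 1 / (1 + r)"
proof -
  let ?X = "simplices V E"
  obtain x0 where x0: "x0 \<in> ?X"
    using p unfolding eigenvector_on_def by blast
  obtain l0 q where "conn_adj x0 x0 \<le> l0" "eigenvector_on ?X conn_adj l0 q"
    using symmetric_eigenvalue_ge_diag[OF finite_simplices symmetric_conn_adj x0] by blast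
  then have r: "0 \<le> r"
    unfolding r_def using largest_eigenvalue_on_ge[OF finite_simplices] by (force simp: conn_adj_def)
  have m: "0 \<le> m"
    using hodge_eigenvalue_nonneg[OF p] .
  obtain l where "0 \<le> l" "l \<le> r" "m = (1 + l) - 1 / (1 + l)"
  proof (cases "m = 0")
    case True
    then show thesis
      using that[of 0] r by simp
  next
    case False
    then obtain l where l: "0 < l" "m = (1 + l) - 1 / (1 + l)"
      using m pos_eq_add_one_minus_inverse by (metis less_eq_real_def)
    then obtain l' q where "l \<le> l'" "eigenvector_on ?X conn_adj l' q"
      using connection_eigenvalue_ge p by blast
    then have "l \<le> r"
      unfolding r_def using largest_eigenvalue_on_ge[OF finite_simplices] by fastforce
    then show thesis
      using that l less_imp_le by blast
  qed
  then show ?thesis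
    using add_one_minus_inverse_mono by blast
qed

end

theorem mainTheorem3:
  fixes V :: "'a set" and E :: "'a set set" and head :: "'a set \<Rightarrow> 'a"
  assumes "simple_graph V E" and "V \<noteq> {}" and "orientation E head"
  defines "r \<equiv> largest_eigenvalue_on (simplices V E) conn_adj"
  shows "spectral_radius_on (simplices V E) (hodge V E head) \<le> (1 + r) - 1 / (1 + r)"
proof -
  interpret oriented_graph V E head
    using assms(1,3) by unfold_locales
  have "simplices V E \<noteq> {}"
    using assms(2) unfolding simplices_def by blast
  then obtain m p where p: "eigenvector_on (simplices V E) (hodge V E head) m p"
    and rho: "spectral_radius_on (simplices V E) (hodge V E head) = \<bar>m\<bar>"
    using spectral_radius_on_symmetric[OF finite_simplices _ symmetric_hodge] by blast
  then show ?thesis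
    using hodge_eigenvalue_nonneg[OF p] hodge_eigenvalue_le[OF p] unfolding r_def by simp
qed

end
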